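(* Let $P$ be a set of $n$ points in the plane in general position with $n$ even, and fix a direction (horizontal axis) such that no two points of $P$ have the same horizontal coordinate. Let $C$ be a connected component of the underlying graph of $P$, with vertex set $V(C)$ of size $m$. Then a vertex $v\in V(C)$ is among the $m/2$ leftmost points of $V(C)$ if and only if it is among the $n/2$ leftmost points of $P$; equivalently, the $m/2$ leftmost points of $V(C)$ are among the $n/2$ leftmost points of $P$ and the $m/2$ rightmost points of $V(C)$ are among the $n/2$ rightmost points of $P$.
   Context: Points are in general position if no three are collinear. For a finite set $P$ of $n$ points in general position with $n$ even, a halving line of $P$ is a line through two points of $P$ that has exactly $(n-2)/2$ points of $P$ strictly on each side. The underlying graph of $P$ has vertex set $P$, and two points are adjacent if and only if the line through them is a halving line of $P$. "Leftmost" refers to ordering by the horizontal coordinate in the fixed direction. *)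

theory Defs
  imports "HOL-Analysis.Analysis"
begin

type_synonym pt = "real \<times> real"

definition orient :: "pt \<Rightarrow> pt \<Rightarrow> pt \<Rightarrow> real" where
  "orient p q r = (fst q - fst p) * (snd r - snd p) - (snd q - snd p) * (fst r - fst p)"

definition collinear3 :: "pt \<Rightarrow> pt \<Rightarrow> pt \<Rightarrow> bool" where
  "collinear3 p q r \<longleftrightarrow> orient p q r = 0"

definition general_position :: "pt set \<Rightarrow> bool" where
  "general_position P \<longleftrightarrow>
     (\<forall>p\<in>P. \<forall>q\<in>P. \<forall>r\<in>P. p \<noteq> q \<and> q \<noteq> r \<and> p \<noteq> r \<longrightarrow> \<not> collinear3 p q r)"

definition halving_line :: "pt set \<Rightarrow> pt \<Rightarrow> pt \<Rightarrow> bool" where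
  "halving_line P p q \<longleftrightarrow> p \<in> P \<and> q \<in> P \<and> p \<noteq> q \<and>
     card {r\<in>P. orient p q r > 0} = (card P - 2) div 2 \<and>
     card {r\<in>P. orient p q r < 0} = (card P - 2) div 2"

definition adj :: "pt set \<Rightarrow> pt \<Rightarrow> pt \<Rightarrow> bool" where
  "adj P p q \<longleftrightarrow> halving_line P p q"

definition component :: "pt set \<Rightarrow> pt \<Rightarrow> pt set" where
  "component P v = {w \<in> P. (adj P)\<^sup>*\<^sup>* v w}"

text \<open>v is among the k leftmost points of S (x-coordinates distinct).\<close>
definition among_leftmost :: "nat \<Rightarrow> pt set \<Rightarrow> pt \<Rightarrow> bool" where
  "among_leftmost k S v \<longleftrightarrow> v \<in> S \<and> card {w\<in>S. fst w < fst v} < k"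

end

theory Submission imports Defs begin

text \<open>
  Rotate a line through a point p of P once around p.  The number of points below it changes
  by one each time it passes through another point q, and it equals (n-2)/2 exactly when the
  line through p and q is halving.  Counting how often the number of points below crosses the
  threshold n/2 upwards or downwards shows that p has one more halving neighbour to its right
  than to its left if p is among the n/2 leftmost points, and one fewer otherwise.  Summing
  over a connected component C, every edge of C is counted once as a right and once as a left
  neighbour, so exactly half of the points of C are among the n/2 leftmost points of P, and
  these are necessarily the leftmost points of C.
\<close>

subsection \<open>Halving lines through a point, ordered by slope\<close>

lemma orient_swap: "orient q p r = - orient p q r"
  unfolding orient_def by (simp add: algebra_simps)

lemma adj_sym: "adj P p q \<Longrightarrow> adj P q p"
proof -
  have "{r\<in>P. orient q p r > 0} = {r\<in>P. orient p q r < 0}"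
    and "{r\<in>P. orient q p r < 0} = {r\<in>P. orient p q r > 0}"
    by (simp_all add: orient_swap[of p q])
  then show "adj P p q \<Longrightarrow> adj P q p" unfolding adj_def halving_line_def by auto
qed

definition slope :: "pt \<Rightarrow> pt \<Rightarrow> real" where
  "slope p r = (snd r - snd p) / (fst r - fst p)"

definition below_line :: "pt set \<Rightarrow> pt \<Rightarrow> pt \<Rightarrow> pt set" where
  "below_line P p q = {r\<in>P. snd r - snd p < slope p q * (fst r - fst p)}"

lemma orient_eq_slope:
  assumes "fst q \<noteq> fst p"
  shows "orient p q r = (fst q - fst p) * ((snd r - snd p) - slope p q * (fst r - fst p))"
  using assms unfolding orient_def slope_def by (simp add: field_simps)

lemma diff_snd_eq_slope: "fst r \<noteq> fst p \<Longrightarrow> snd r - snd p = slope p r * (fst r - fst p)"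
  unfolding slope_def by simp

lemma inj_on_slope:
  assumes gp: "general_position P" and p: "p \<in> P" and dx: "inj_on fst P"
  shows "inj_on (slope p) (P - {p})"
proof (rule inj_onI, rule ccontr)
  fix r r' assume r: "r \<in> P - {p}" and r': "r' \<in> P - {p}"
    and eq: "slope p r = slope p r'" and ne: "r \<noteq> r'"
  have "fst r \<noteq> fst p" "fst r' \<noteq> fst p" using r r' p dx by (auto dest: inj_onD)
  then have "snd r - snd p = slope p r' * (fst r - fst p)"
    and "snd r' - snd p = slope p r' * (fst r' - fst p)"
    using diff_snd_eq_slope[of r p] diff_snd_eq_slope[of r' p] eq by auto
  then have "orient p r r' = (fst r - fst p) * (slope p r' * (fst r' - fst p))
      - (slope p r' * (fst r - fst p)) * (fst r' - fst p)"
    by (simp only: orient_def)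
  then have "orient p r r' = 0" by (simp add: algebra_simps)
  then show False using gp p r r' ne unfolding general_position_def collinear3_def by auto
qed

lemma mem_below_line_iff:
  assumes "r \<in> P" "fst r \<noteq> fst p"
  shows "r \<in> below_line P p q \<longleftrightarrow>
    (fst r < fst p \<and> slope p q < slope p r) \<or> (fst p < fst r \<and> slope p r < slope p q)"
proof -
  have "r \<in> below_line P p q \<longleftrightarrow> slope p r * (fst r - fst p) < slope p q * (fst r - fst p)"
    unfolding below_line_def using assms diff_snd_eq_slope[of r p] by auto
  also have "\<dots> \<longleftrightarrow> (fst r < fst p \<and> slope p q < slope p r) \<or> (fst p < fst r \<and> slope p r < slope p q)"
    using assms(2) by (cases "fst r < fst p") (auto simp: mult_less_cancel_right)
  finally show ?thesis .
qed

lemma not_mem_below_line: "fst q \<noteq> fst p \<Longrightarrow> q \<notin> below_line P p q"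
  using diff_snd_eq_slope[of q p] unfolding below_line_def by auto

text \<open>One open side of the line pq is the set of points below it, the other the set of points
  above it; since n is even, both have (n-2)/2 points as soon as one of them has.\<close>

lemma halving_line_iff_card_below_line:
  assumes fin: "finite P" and ev: "even (card P)" and gp: "general_position P"
    and p: "p \<in> P" and q: "q \<in> P" and pq: "p \<noteq> q" and dx: "fst p \<noteq> fst q"
  shows "halving_line P p q \<longleftrightarrow> card (below_line P p q) = (card P - 2) div 2"
proof -
  define Pos where "Pos = {r\<in>P. orient p q r > 0}"
  define Neg where "Neg = {r\<in>P. orient p q r < 0}"
  have nonzero: "orient p q r \<noteq> 0" if "r \<in> P - {p, q}" for r
    using gp p q pq that unfolding general_position_def collinear3_def by auto
  have union: "Pos \<union> Neg = P - {p, q}"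
  proof
    show "Pos \<union> Neg \<subseteq> P - {p, q}" unfolding Pos_def Neg_def by (auto simp: orient_def)
    show "P - {p, q} \<subseteq> Pos \<union> Neg" using nonzero unfolding Pos_def Neg_def by (force simp: linorder_neq_iff)
  qed
  have "Pos \<inter> Neg = {}" "finite Pos" "finite Neg" using fin unfolding Pos_def Neg_def by auto
  then have "card Pos + card Neg = card (P - {p, q})" by (simp flip: union card_Un_disjoint)
  also have "\<dots> = card P - 2" using p q pq fin by (simp add: card_Diff_subset)
  finally have sides: "card Pos + card Neg = card P - 2" .
  have below: "below_line P p q = Pos \<or> below_line P p q = Neg"
  proof (cases "fst p < fst q")
    case True
    then have "below_line P p q = Neg" unfolding below_line_def Neg_def using orient_eq_slope[of q p] dx
      by (auto simp: mult_less_0_iff)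
    then show ?thesis ..
  next
    case False
    then have "fst q < fst p" using dx by auto
    then have "below_line P p q = Pos" unfolding below_line_def Pos_def using orient_eq_slope[of q p] dx
      by (auto simp: zero_less_mult_iff)
    then show ?thesis ..
  qed
  have "halving_line P p q \<longleftrightarrow> card Pos = (card P - 2) div 2 \<and> card Neg = (card P - 2) div 2"
    unfolding halving_line_def Pos_def Neg_def using p q pq by auto
  moreover obtain k where k: "card P = 2 * k" using ev by (auto elim!: evenE)
  moreover have "(card P - 2) div 2 = k - 1" using k by presburger
  ultimately show ?thesis using below sides by auto
qed

subsection \<open>Sweeping the line around a point\<close>

lemma sum_telescope_by_rank:
  fixes h :: "'a \<Rightarrow> 'b::linorder" and \<Phi> :: "'a set \<Rightarrow> 'c::ab_group_add"
  assumes "finite S" "inj_on h S"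
  shows "(\<Sum>q\<in>S. \<Phi> {r\<in>S. h r \<le> h q} - \<Phi> {r\<in>S. h r < h q}) = \<Phi> S - \<Phi> {}"
  using assms
proof (induction "card S" arbitrary: S)
  case 0
  then show ?case by simp
next
  case (Suc n)
  then have "Max (h ` S) \<in> h ` S" by (intro Max_in) auto
  then obtain m where m: "m \<in> S" "h m = Max (h ` S)" by auto
  define S' where "S' = S - {m}"
  have below_m: "h q < h m" if "q \<in> S'" for q
  proof -
    have "h q \<le> h m" using that m Suc.prems unfolding S'_def by simp
    moreover have "h q \<noteq> h m"
      using inj_onD[OF Suc.prems(2), of q m] that m(1) unfolding S'_def by blast
    ultimately show ?thesis by simp
  qed
  have S': "finite S'" "inj_on h S'" "n = card S'"
    using Suc m unfolding S'_def by (auto intro: inj_on_subset)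
  have top: "{r\<in>S. h r \<le> h m} = S" "{r\<in>S. h r < h m} = S'"
    using m Suc.prems below_m unfolding S'_def by (auto simp: less_le)
  have restrict: "{r\<in>S. h r \<le> h q} = {r\<in>S'. h r \<le> h q}" "{r\<in>S. h r < h q} = {r\<in>S'. h r < h q}"
    if "q \<in> S'" for q
    using below_m[OF that] unfolding S'_def by auto
  have "(\<Sum>q\<in>S'. \<Phi> {r\<in>S. h r \<le> h q} - \<Phi> {r\<in>S. h r < h q})
      = (\<Sum>q\<in>S'. \<Phi> {r\<in>S'. h r \<le> h q} - \<Phi> {r\<in>S'. h r < h q})"
    using restrict by (intro sum.cong) auto
  also have "\<dots> = \<Phi> S' - \<Phi> {}" using Suc.hyps(1)[OF S'(3) S'(1,2)] by simp
  finally show ?case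
    using sum.remove[OF Suc.prems(1) m(1), of "\<lambda>q. \<Phi> {r\<in>S. h r \<le> h q} - \<Phi> {r\<in>S. h r < h q}"] top
    unfolding S'_def by simp
qed

text \<open>If A is the set of points whose slope seen from p is at most s, then this is the set of
  points below a line through p of slope slightly larger than s.\<close>

definition sweep_below :: "pt set \<Rightarrow> pt \<Rightarrow> pt set \<Rightarrow> pt set" where
  "sweep_below P p A = {r\<in>P. fst r < fst p \<and> r \<notin> A} \<union> {r\<in>P. fst p < fst r \<and> r \<in> A}"

lemma sweep_below_slope:
  assumes gp: "general_position P" and dx: "inj_on fst P" and p: "p \<in> P" and q: "q \<in> P - {p}"
  shows "sweep_below P p {r\<in>P - {p}. slope p r \<le> slope p q} = below_line P p q \<union> {r. r = q \<and> fst p < fst q}"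
    and "sweep_below P p {r\<in>P - {p}. slope p r < slope p q} = below_line P p q \<union> {r. r = q \<and> fst q < fst p}"
proof -
  have "fst q \<noteq> fst p" using q p dx by (auto dest: inj_onD)
  then have q_not_below: "q \<notin> below_line P p q" by (rule not_mem_below_line)
  have below_iff: "r \<in> below_line P p q \<longleftrightarrow> r \<in> P - {p} \<and> r \<noteq> q \<and>
      ((fst r < fst p \<and> slope p q < slope p r) \<or> (fst p < fst r \<and> slope p r < slope p q))" for r
  proof (cases "r \<in> P - {p}")
    case True
    then have "fst r \<noteq> fst p" using p dx by (auto dest: inj_onD)
    then show ?thesis using True mem_below_line_iff[of r P p q] q_not_below by auto
  next
    case False
    then show ?thesis unfolding below_line_def by auto
  qed
  have "(r \<in> sweep_below P p {r\<in>P - {p}. slope p r \<le> slope p q} \<longleftrightarrow> r \<in> below_line P p q \<or> (r = q \<and> fst p < fst q))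
    \<and> (r \<in> sweep_below P p {r\<in>P - {p}. slope p r < slope p q} \<longleftrightarrow> r \<in> below_line P p q \<or> (r = q \<and> fst q < fst p))"
    for r
  proof -
    consider "r \<notin> P \<or> fst r = fst p" | "r = q" | "r \<in> P" "fst r \<noteq> fst p" "r \<noteq> q" by blast
    then show ?thesis
    proof cases
      case 3
      then have "slope p r \<noteq> slope p q"
        using inj_on_slope[OF gp p dx] q by (auto dest: inj_onD)
      then show ?thesis using 3 unfolding sweep_below_def below_iff by (auto simp: linorder_neq_iff)
    qed (use q in \<open>auto simp: sweep_below_def below_iff\<close>)
  qed
  then show "sweep_below P p {r\<in>P - {p}. slope p r \<le> slope p q} = below_line P p q \<union> {r. r = q \<and> fst p < fst q}"
    and "sweep_below P p {r\<in>P - {p}. slope p r < slope p q} = below_line P p q \<union> {r. r = q \<and> fst q < fst p}"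
    by (simp_all add: set_eq_iff)
qed

lemma sweep_below_threshold_step:
  assumes fin: "finite P" and ev: "even (card P)" and gp: "general_position P"
    and dx: "inj_on fst P" and p: "p \<in> P" and q: "q \<in> P - {p}"
  shows "of_bool (card P div 2 \<le> card (sweep_below P p {r\<in>P - {p}. slope p r \<le> slope p q}))
       - of_bool (card P div 2 \<le> card (sweep_below P p {r\<in>P - {p}. slope p r < slope p q}))
     = (of_bool (adj P p q \<and> fst p < fst q) - of_bool (adj P p q \<and> fst q < fst p) :: int)"
proof -
  have qP: "q \<in> P" "q \<noteq> p" "fst q \<noteq> fst p" using q p dx by (auto dest: inj_onD)
  have "card P \<noteq> 0" using p fin by auto
  then have "2 \<le> card P" "(card P - 2) div 2 = card P div 2 - 1" using ev by presburger+
  moreover have "adj P p q \<longleftrightarrow> card (below_line P p q) = (card P - 2) div 2"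
    using halving_line_iff_card_below_line[OF fin ev gp p qP(1)] qP unfolding adj_def by auto
  moreover have "finite (below_line P p q)" using fin unfolding below_line_def by auto
  ultimately show ?thesis
    using sweep_below_slope[OF gp dx p q] qP(3) not_mem_below_line[OF qP(3), of P]
    by (cases "fst p < fst q") auto
qed

lemma halving_neighbours_balance:
  assumes fin: "finite P" and ev: "even (card P)" and gp: "general_position P"
    and dx: "inj_on fst P" and p: "p \<in> P"
  shows "int (card {q. adj P p q \<and> fst p < fst q}) - int (card {q. adj P p q \<and> fst q < fst p})
     = (if among_leftmost (card P div 2) P p then 1 else -1)"
proof -
  define S where "S = P - {p}"
  define \<Phi> :: "pt set \<Rightarrow> int" where "\<Phi> A = of_bool (card P div 2 \<le> card (sweep_below P p A))" for A
  define Right where "Right = {r\<in>P. fst p < fst r}"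
  define Left where "Left = {r\<in>P. fst r < fst p}"
  have "int (card {q. adj P p q \<and> fst p < fst q}) - int (card {q. adj P p q \<and> fst q < fst p})
      = (\<Sum>q\<in>S. of_bool (adj P p q \<and> fst p < fst q) - of_bool (adj P p q \<and> fst q < fst p))"
  proof -
    have "S \<inter> {q. adj P p q \<and> fst p < fst q} = {q. adj P p q \<and> fst p < fst q}"
      and "S \<inter> {q. adj P p q \<and> fst q < fst p} = {q. adj P p q \<and> fst q < fst p}"
      unfolding S_def adj_def halving_line_def by auto
    then show ?thesis using fin unfolding S_def by (simp add: sum_subtractf)
  qed
  also have "\<dots> = (\<Sum>q\<in>S. \<Phi> {r\<in>S. slope p r \<le> slope p q} - \<Phi> {r\<in>S. slope p r < slope p q})"
    using sweep_below_threshold_step[OF fin ev gp dx p] unfolding \<Phi>_def S_def by simp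
  also have "\<dots> = \<Phi> S - \<Phi> {}"
    using sum_telescope_by_rank fin inj_on_slope[OF gp p dx] unfolding S_def by blast
  also have "\<dots> = of_bool (card P div 2 \<le> card Right) - of_bool (card P div 2 \<le> card Left)"
  proof -
    have "sweep_below P p S = Right" "sweep_below P p {} = Left"
      unfolding sweep_below_def S_def Right_def Left_def by auto
    then show ?thesis unfolding \<Phi>_def by simp
  qed
  also have "\<dots> = (if among_leftmost (card P div 2) P p then 1 else -1)"
  proof -
    have "fst r \<noteq> fst p" if "r \<in> P - {p}" for r using that p dx by (auto dest: inj_onD)
    then have "Right \<union> Left = P - {p}" unfolding Right_def Left_def by (auto simp: linorder_neq_iff)
    moreover have "card (Right \<union> Left) = card Right + card Left"
      using fin unfolding Right_def Left_def by (intro card_Un_disjoint) auto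
    ultimately have "card Right + card Left = card (P - {p})" by simp
    moreover have "card (P - {p}) = card P - 1" "0 < card P" using fin p by (auto simp: card_gt_0_iff)
    ultimately have "card Right + card Left + 1 = card P" by linarith
    then show ?thesis using ev p unfolding among_leftmost_def Left_def by (auto; presburger)
  qed
  finally show ?thesis .
qed

lemma sum_card_upper_neighbours_eq_lower:
  fixes E :: "'a \<Rightarrow> 'a \<Rightarrow> bool" and f :: "'a \<Rightarrow> 'b::linorder"
  assumes fin: "finite C" and sym: "\<And>p q. E p q \<Longrightarrow> E q p"
    and closed: "\<And>p q. p \<in> C \<Longrightarrow> E p q \<Longrightarrow> q \<in> C"
  shows "(\<Sum>p\<in>C. card {q. E p q \<and> f p < f q}) = (\<Sum>p\<in>C. card {q. E p q \<and> f q < f p})"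
proof -
  define U where "U p = {q. E p q \<and> f p < f q}" for p
  define L where "L p = {q. E p q \<and> f q < f p}" for p
  have "U p \<subseteq> C" "L p \<subseteq> C" if "p \<in> C" for p
    using closed[OF that] unfolding U_def L_def by auto
  then have finU: "finite (U p)" and finL: "finite (L p)" if "p \<in> C" for p
    using that fin by (meson finite_subset)+
  have "(SIGMA p:C. L p) = prod.swap ` (SIGMA p:C. U p)"
    unfolding U_def L_def using closed sym by (auto simp: image_iff)
  then have "(\<Sum>p\<in>C. card (L p)) = card (prod.swap ` (SIGMA p:C. U p))"
    using fin finL by (simp flip: card_SigmaI)
  also have "\<dots> = (\<Sum>p\<in>C. card (U p))"
    using fin finU by (simp add: card_image)
  finally show ?thesis unfolding U_def L_def by simp
qed

lemma component_subset: "component P v \<subseteq> P"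
  unfolding component_def by auto

lemma component_closed:
  assumes "p \<in> component P v" and "adj P p q"
  shows "q \<in> component P v"
proof -
  have "q \<in> P" using assms(2) unfolding adj_def halving_line_def by simp
  then show ?thesis using assms unfolding component_def by (auto intro: rtranclp.rtrancl_into_rtrancl)
qed

lemma among_leftmost_before:
  assumes fin: "finite P" and dx: "inj_on fst P" and v: "v \<in> P" and w: "w \<in> P"
    and "among_leftmost k P v" and "\<not> among_leftmost k P w"
  shows "fst v < fst w"
proof (rule ccontr)
  assume "\<not> fst v < fst w"
  moreover have "v \<noteq> w" using assms by auto
  then have "fst v \<noteq> fst w" using dx v w by (auto dest: inj_onD)
  ultimately have "fst w < fst v" by simp
  then have "card {u\<in>P. fst u < fst w} \<le> card {u\<in>P. fst u < fst v}"
    using fin by (intro card_mono) auto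
  then show False using assms unfolding among_leftmost_def by auto
qed

lemma among_leftmost_subset_iff:
  assumes fin: "finite P" and dx: "inj_on fst P" and CP: "C \<subseteq> P" and v: "v \<in> C"
  shows "among_leftmost (card {w\<in>C. among_leftmost k P w}) C v \<longleftrightarrow> among_leftmost k P v"
proof -
  define Left where "Left = {w\<in>C. among_leftmost k P w}"
  have finC: "finite C" using CP fin by (rule finite_subset)
  have vP: "v \<in> P" using v CP by auto
  show ?thesis unfolding Left_def[symmetric]
  proof
    assume v_left: "among_leftmost k P v"
    have "w \<in> Left - {v}" if w: "w \<in> C" "fst w < fst v" for w
    proof -
      have "among_leftmost k P w"
        using among_leftmost_before[OF fin dx vP, of w k] w CP v_left by force
      then show ?thesis using w unfolding Left_def by auto
    qed
    then have "card {w\<in>C. fst w < fst v} \<le> card (Left - {v})"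
      using finC unfolding Left_def by (intro card_mono) auto
    also have "\<dots> < card Left"
      using finC v v_left unfolding Left_def by (intro card_Diff1_less) auto
    finally show "among_leftmost (card Left) C v" unfolding among_leftmost_def using v by auto
  next
    assume "among_leftmost (card Left) C v"
    show "among_leftmost k P v"
    proof (rule ccontr)
      assume "\<not> among_leftmost k P v"
      then have "Left \<subseteq> {w\<in>C. fst w < fst v}"
        using among_leftmost_before[OF fin dx _ vP] CP unfolding Left_def by blast
      then have "card Left \<le> card {w\<in>C. fst w < fst v}"
        using finC by (intro card_mono) auto
      then show False using \<open>among_leftmost (card Left) C v\<close> unfolding among_leftmost_def by auto
    qed
  qed
qed

lemma card_component_eq_twice_leftmost:
  assumes fin: "finite P" and ev: "even (card P)" and gp: "general_position P" and dx: "inj_on fst P"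
  shows "card (component P v) = 2 * card {w\<in>component P v. among_leftmost (card P div 2) P w}"
proof -
  define C where "C = component P v"
  define Left where "Left = {w. among_leftmost (card P div 2) P w}"
  have CP: "C \<subseteq> P" unfolding C_def by (rule component_subset)
  have finC: "finite C" using CP fin by (rule finite_subset)
  have closed: "\<And>p q. p \<in> C \<Longrightarrow> adj P p q \<Longrightarrow> q \<in> C"
    unfolding C_def by (rule component_closed)
  have "0 = (\<Sum>p\<in>C. int (card {q. adj P p q \<and> fst p < fst q}) - int (card {q. adj P p q \<and> fst q < fst p}))"
    using sum_card_upper_neighbours_eq_lower[OF finC adj_sym[of P] closed, where f = fst]
    by (simp add: sum_subtractf flip: of_nat_sum)
  also have "\<dots> = (\<Sum>p\<in>C. if p \<in> Left then 1 else -1)"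
    using halving_neighbours_balance[OF fin ev gp dx] CP unfolding Left_def
    by (intro sum.cong) (auto simp: subset_iff)
  also have "\<dots> = int (card (C \<inter> Left)) - int (card (C - Left))"
    using finC by (simp add: sum.If_cases Diff_eq)
  finally have "card (C - Left) = card (C \<inter> Left)" by simp
  then have "card C = 2 * card (C \<inter> Left)" using card_Int_Diff[OF finC, of Left] by simp
  moreover have "C \<inter> Left = {w\<in>C. among_leftmost (card P div 2) P w}" unfolding Left_def by auto
  ultimately show ?thesis unfolding C_def by simp
qed

theorem mainTheorem7:
  fixes P :: "pt set" and v0 :: pt
  assumes "finite P"
    and "even (card P)"
    and "general_position P"
    and "\<forall>p\<in>P. \<forall>q\<in>P. p \<noteq> q \<longrightarrow> fst p \<noteq> fst q"
    and "v0 \<in> P"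
  shows "\<forall>v\<in>component P v0.
           among_leftmost (card (component P v0) div 2) (component P v0) v
             \<longleftrightarrow> among_leftmost (card P div 2) P v"
proof
  fix v assume v: "v \<in> component P v0"
  have dx: "inj_on fst P" using assms(4) by (auto intro: inj_onI)
  have "card (component P v0) div 2 = card {w\<in>component P v0. among_leftmost (card P div 2) P w}"
    using card_component_eq_twice_leftmost[OF assms(1-3) dx] by simp
  then show "among_leftmost (card (component P v0) div 2) (component P v0) v
      \<longleftrightarrow> among_leftmost (card P div 2) P v"
    using among_leftmost_subset_iff[OF assms(1) dx component_subset v] by simp
qed

end
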